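(* Let $\vec B$ be a binary digit vector of length $N$. If $x\in\mathbb Q\cap[0,1]$, then $F_{\vec B}(x)\in\mathbb Q$.
   Context: A binary digit vector of length (scale factor) $N\ge3$ is $\vec B=(b_0,\dots,b_{N-1})\in\{0,1\}^N$ with $2\le\|\vec B\|:=\sum_i b_i\le N-1$; its digit set is $D=\{i:b_i=1\}$. With $\phi_d(x)=(x+d)/N$ for $d\in D$, let $\mu_{\vec B}$ be the unique Borel probability measure with $\mu_{\vec B}=\frac{1}{\|\vec B\|}\sum_{d\in D}\mu_{\vec B}\circ\phi_d^{-1}$, supported on the attractor $C_{\vec B}\subset[0,1]$. The CDF is $F_{\vec B}(x)=\mu_{\vec B}([0,x])$, $x\in[0,1]$. *)

theory Defs
  imports "HOL-Probability.Probability"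
begin

definition binary_digit_vector :: "nat \<Rightarrow> nat list \<Rightarrow> bool" where
  "binary_digit_vector N b \<longleftrightarrow> N \<ge> 3 \<and> length b = N \<and> set b \<subseteq> {0, 1}
     \<and> 2 \<le> sum_list b \<and> sum_list b \<le> N - 1"

definition digit_set :: "nat list \<Rightarrow> nat set" where
  "digit_set b = {i. i < length b \<and> b ! i = 1}"

definition ifs_map :: "nat list \<Rightarrow> nat \<Rightarrow> real \<Rightarrow> real" where
  "ifs_map b d x = (x + real d) / real (length b)"

definition ss_measure :: "nat list \<Rightarrow> real measure" where
  "ss_measure b = (THE M. prob_space M \<and> sets M = sets borel \<and>
     (\<forall>A \<in> sets borel. measure M A =
        (1 / real (sum_list b)) * (\<Sum>d \<in> digit_set b. measure M (ifs_map b d -` A))))"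

definition ss_cdf :: "nat list \<Rightarrow> real \<Rightarrow> real" where
  "ss_cdf b x = measure (ss_measure b) {0..x}"

end

theory Submission
  imports Defs
begin

text \<open>Write N = length b, n = sum_list b and F for the distribution function of a
  self-similar measure. Comparing the mass outside [0, 1] with the mass outside ever larger
  neighbourhoods shows that F vanishes on the negative reals and equals 1 on [1, \<infinity>). For x \<ge> 0
  the self-similarity equation then collapses to the digit recursion
  F x = #{d \<in> D. d < j} / n + [j \<in> D] / n * F (frac (N x)),  with j = \<lfloor>N x\<rfloor>,
  whose coefficients are rational and at most 1 / n. The orbit of a rational x under
  y \<mapsto> frac (N y) is eventually periodic, and iterating the recursion once around a period gives
  F z = A + C F z with A, C rational and C < 1 at a periodic point z; so F z, and with it F x,
  is rational. The same recursion forces any two self-similar measures to have distribution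
  functions that differ by at most n^-k for every k, which, together with the law of a random
  N-adic expansion with uniformly chosen digits, identifies ss_measure.\<close>

lemma frac_mult_orbit_repeats:
  fixes m :: nat and x :: real
  assumes "x \<in> \<rat>"
  obtains i j
  where "i < j" "((\<lambda>y. frac (real m * y)) ^^ i) x = ((\<lambda>y. frac (real m * y)) ^^ j) x"
proof -
  define T where "T = (\<lambda>y. frac (real m * y))"
  obtain p q :: int where q: "q > 0" and x: "x = of_int p / of_int q"
    using Rats_cases'[OF assms] by metis
  have denom: "\<exists>r::int. (T ^^ i) x = of_int r / of_int q" for i
  proof (induction i)
    case (Suc i)
    then obtain r where r: "(T ^^ i) x = of_int r / of_int q" by blast
    define w where "w = \<lfloor>real m * (T ^^ i) x\<rfloor>"
    have "(T ^^ Suc i) x = real m * (T ^^ i) x - of_int w"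
      by (simp add: T_def frac_def w_def)
    also have "\<dots> = of_int (int m * r - q * w) / of_int q"
      using q by (simp add: r field_simps)
    finally show ?case by blast
  qed (use x in auto)
  have "(T ^^ Suc i) x \<in> (\<lambda>r. of_int r / of_int q) ` {0..<q}" for i
  proof -
    obtain r where r: "(T ^^ Suc i) x = of_int r / of_int q" using denom by blast
    have "0 \<le> (T ^^ Suc i) x" "(T ^^ Suc i) x < 1"
      by (simp_all add: T_def frac_lt_1)
    then have "0 \<le> real_of_int r / of_int q" "real_of_int r / of_int q < 1"
      by (simp_all only: r)
    then have "r \<in> {0..<q}" using q by (simp add: divide_less_eq le_divide_eq)
    then show ?thesis using r by blast
  qed
  then have "\<not> inj (\<lambda>i. (T ^^ Suc i) x)"
    using inj_on_finite[of "\<lambda>i. (T ^^ Suc i) x" UNIV] by blast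
  then obtain i j where "i \<noteq> j" "(T ^^ Suc i) x = (T ^^ Suc j) x"
    unfolding inj_def by blast
  then show ?thesis
    using that[of "Suc i" "Suc j"] that[of "Suc j" "Suc i"] unfolding T_def
    by (cases "i < j") auto
qed

lemma affine_recursion_iterate:
  fixes F :: "'a \<Rightarrow> real" and T :: "'a \<Rightarrow> 'a"
  assumes closed: "\<And>y. y \<in> S \<Longrightarrow> T y \<in> S"
    and step: "\<And>y. y \<in> S \<Longrightarrow>
      \<exists>a\<in>\<rat>. \<exists>c\<in>\<rat>. 0 \<le> c \<and> c \<le> r \<and> F y = a + c * F (T y)"
    and "y \<in> S"
  shows "\<exists>A\<in>\<rat>. \<exists>C\<in>\<rat>. 0 \<le> C \<and> C \<le> r ^ k \<and> F y = A + C * F ((T ^^ k) y)"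
  using \<open>y \<in> S\<close>
proof (induction k arbitrary: y)
  case 0
  show ?case by (rule bexI[of _ 0], rule bexI[of _ 1]) auto
next
  case (Suc k)
  obtain a c where ac: "a \<in> \<rat>" "c \<in> \<rat>" "0 \<le> c" "c \<le> r" "F y = a + c * F (T y)"
    using step[OF Suc.prems] by blast
  obtain A C where AC: "A \<in> \<rat>" "C \<in> \<rat>" "0 \<le> C" "C \<le> r ^ k"
      "F (T y) = A + C * F ((T ^^ k) (T y))"
    using Suc.IH closed[OF Suc.prems] by blast
  have "c * C \<le> r * r ^ k" using ac AC by (intro mult_mono) auto
  moreover have "F y = (a + c * A) + (c * C) * F ((T ^^ k) (T y))"
    using ac(5) AC(5) by (simp add: algebra_simps)
  moreover have "(T ^^ k) (T y) = (T ^^ Suc k) y"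
    by (simp add: funpow_swap1)
  ultimately show ?case using ac AC by (intro bexI[of _ "a + c * A"] bexI[of _ "c * C"]) auto
qed

lemma affine_recursion_periodic_rational:
  fixes F :: "'a \<Rightarrow> real" and T :: "'a \<Rightarrow> 'a"
  assumes closed: "\<And>y. y \<in> S \<Longrightarrow> T y \<in> S"
    and step: "\<And>y. y \<in> S \<Longrightarrow>
      \<exists>a\<in>\<rat>. \<exists>c\<in>\<rat>. 0 \<le> c \<and> c \<le> r \<and> F y = a + c * F (T y)"
    and "r < 1" and "y \<in> S" and "i < j" and periodic: "(T ^^ i) y = (T ^^ j) y"
  shows "F y \<in> \<rat>"
proof -
  define z where "z = (T ^^ i) y"
  have "z \<in> S" unfolding z_def by (induction i) (use closed \<open>y \<in> S\<close> in auto)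
  obtain A C where AC: "A \<in> \<rat>" "C \<in> \<rat>" "0 \<le> C" "C \<le> r ^ (j - i)"
      "F z = A + C * F ((T ^^ (j - i)) z)"
    using affine_recursion_iterate[where F = F and T = T, OF closed step \<open>z \<in> S\<close>] by blast
  have "(T ^^ (j - i)) z = (T ^^ (j - i + i)) y"
    by (simp add: z_def funpow_add)
  also have "\<dots> = z"
    using periodic \<open>i < j\<close> by (simp add: z_def)
  finally have "(T ^^ (j - i)) z = z" .
  then have fixed: "F z = A + C * F z" using AC(5) by simp
  have "0 \<le> r" using step[OF \<open>y \<in> S\<close>] by auto
  then have "r ^ (j - i) \<le> r ^ 1"
    using \<open>r < 1\<close> \<open>i < j\<close> by (intro power_decreasing) auto
  then have "C < 1" using AC(4) \<open>r < 1\<close> by simp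
  then have "F z = A / (1 - C)" using fixed by (simp add: field_simps)
  then have "F z \<in> \<rat>" using AC(1,2) by simp
  moreover obtain A' C' where "A' \<in> \<rat>" "C' \<in> \<rat>" "F y = A' + C' * F z"
    using affine_recursion_iterate[where F = F and T = T, OF closed step \<open>y \<in> S\<close>, of i]
    unfolding z_def by blast
  ultimately show ?thesis by simp
qed

definition self_similar :: "nat list \<Rightarrow> real measure \<Rightarrow> bool" where
  "self_similar b M \<longleftrightarrow> real_distribution M \<and>
     (\<forall>A \<in> sets borel. measure M A =
        (1 / real (sum_list b)) * (\<Sum>d \<in> digit_set b. measure M (ifs_map b d -` A)))"

lemma ss_measure_eq_The_self_similar: "ss_measure b = (THE M. self_similar b M)"
  by (simp add: ss_measure_def self_similar_def real_distribution_def
      real_distribution_axioms_def conj_assoc)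

lemma finite_digit_set: "finite (digit_set b)"
  unfolding digit_set_def by simp

lemma digit_set_less_length: "d \<in> digit_set b \<Longrightarrow> d < length b"
  unfolding digit_set_def by simp

lemma card_digit_set:
  assumes "set b \<subseteq> {0, 1}"
  shows "card (digit_set b) = sum_list b"
proof -
  have "sum_list b = (\<Sum>i<length b. b ! i)"
    by (simp add: sum_list_sum_nth atLeast0LessThan)
  also have "\<dots> = (\<Sum>i<length b. if b ! i = 1 then 1 else 0)"
  proof (rule sum.cong)
    fix i assume "i \<in> {..<length b}"
    then have "b ! i \<in> {0, 1}" using assms nth_mem by fastforce
    then show "b ! i = (if b ! i = 1 then 1 else 0)" by auto
  qed simp
  also have "\<dots> = card (digit_set b)"
    by (simp add: sum.If_cases digit_set_def) (rule arg_cong[where f = card]; auto)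
  finally show ?thesis by simp
qed

lemma measurable_ifs_map [measurable]: "ifs_map b d \<in> borel_measurable borel"
  unfolding ifs_map_def by measurable

lemma vimage_ifs_map_atMost:
  assumes "b \<noteq> []"
  shows "ifs_map b d -` {..y} = {..real (length b) * y - real d}"
  using assms by (auto simp: ifs_map_def pos_divide_le_eq algebra_simps)

definition beyond_unit_interval :: "real \<Rightarrow> real set" where
  "beyond_unit_interval t = {..< -t} \<union> {1 + t <..}"

lemma vimage_ifs_map_beyond_unit_interval:
  assumes "d < length b"
  shows "ifs_map b d -` beyond_unit_interval t \<subseteq> beyond_unit_interval (real (length b) * t)"
proof
  fix y assume "y \<in> ifs_map b d -` beyond_unit_interval t"
  then have "(y + real d) / real (length b) < - t \<or> 1 + t < (y + real d) / real (length b)"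
    by (simp add: beyond_unit_interval_def ifs_map_def)
  moreover have "0 < real (length b)" "real d + 1 \<le> real (length b)" using assms by linarith+
  ultimately have "y < - (real (length b) * t) \<or> 1 + real (length b) * t < y"
    by (auto simp: divide_less_eq less_divide_eq algebra_simps)
  then show "y \<in> beyond_unit_interval (real (length b) * t)"
    by (simp add: beyond_unit_interval_def)
qed

locale digit_vector =
  fixes b :: "nat list"
  assumes binary_digit_vector: "binary_digit_vector (length b) b"
begin

lemma length_ge_3: "length b \<ge> 3"
  using binary_digit_vector by (simp add: binary_digit_vector_def)

lemma sum_list_ge_2: "sum_list b \<ge> 2"
  using binary_digit_vector by (simp add: binary_digit_vector_def)

lemma card_digits: "card (digit_set b) = sum_list b"
  using binary_digit_vector card_digit_set by (simp add: binary_digit_vector_def)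

lemma digit_set_nonempty: "digit_set b \<noteq> {}"
proof
  assume "digit_set b = {}"
  then have "card (digit_set b) = 0" by simp
  with card_digits sum_list_ge_2 show False by linarith
qed

text \<open>The digits are clamped to at most length b - 1 so that the series converges on every
  stream of naturals, not only on streams of digits.\<close>
definition digit_expansion :: "nat stream \<Rightarrow> real" where
  "digit_expansion X = (\<Sum>k. real (min (X !! k) (length b - 1)) / real (length b) ^ Suc k)"

lemma summable_digit_expansion:
  "summable (\<lambda>k. real (min (X !! k) (length b - 1)) / real (length b) ^ Suc k)"
proof (rule summable_comparison_test')
  have "1 < real (length b)" using length_ge_3 by simp
  then show "summable (\<lambda>k. (1 / real (length b)) ^ k)"
    by (intro summable_geometric) (simp add: divide_less_eq)
  fix k
  have "real (min (X !! k) (length b - 1)) \<le> real (length b)" by simp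
  then have "real (min (X !! k) (length b - 1)) / real (length b) ^ Suc k
      \<le> real (length b) / real (length b) ^ Suc k"
    by (intro divide_right_mono) auto
  also have "\<dots> = (1 / real (length b)) ^ k"
    using length_ge_3 by (cases b) (simp_all add: power_divide)
  finally show "norm (real (min (X !! k) (length b - 1)) / real (length b) ^ Suc k)
      \<le> (1 / real (length b)) ^ k"
    by simp
qed

lemma digit_expansion_SCons:
  assumes "d \<in> digit_set b"
  shows "digit_expansion (d ## X) = ifs_map b d (digit_expansion X)"
proof -
  let ?f = "\<lambda>k. real (min ((d ## X) !! k) (length b - 1)) / real (length b) ^ Suc k"
  have "digit_expansion (d ## X) = ?f 0 + (\<Sum>k. ?f (Suc k))"
    unfolding digit_expansion_def
    using suminf_split_head[OF summable_digit_expansion[of "d ## X"]] by simp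
  also have "?f 0 = real d / real (length b)"
    using digit_set_less_length[OF assms] by simp
  also have "(\<Sum>k. ?f (Suc k)) = digit_expansion X / real (length b)"
    unfolding digit_expansion_def
    using suminf_divide[OF summable_digit_expansion[of X], of "real (length b)"]
    by (simp add: field_simps)
  finally show ?thesis by (simp add: ifs_map_def add_divide_distrib)
qed

lemma measurable_digit_expansion [measurable]:
  "digit_expansion \<in> borel_measurable (stream_space (measure_pmf p))"
  unfolding digit_expansion_def by measurable

lemma self_similar_digit_expansion:
  "self_similar b (distr (stream_space (pmf_of_set (digit_set b))) borel digit_expansion)"
    (is "self_similar b ?M")
proof -
  define P where "P = measure_pmf (pmf_of_set (digit_set b))"
  interpret P: prob_space P unfolding P_def by (rule prob_space_measure_pmf)
  interpret S: prob_space "stream_space P" by (rule P.prob_space_stream_space)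
  have [measurable]: "digit_expansion \<in> borel_measurable (stream_space P)"
    unfolding P_def by simp
  interpret M: real_distribution ?M
    unfolding P_def[symmetric] by (intro S.real_distribution_distr) simp
  have emeasure_M:
      "emeasure ?M A = (\<integral>\<^sup>+X. indicator A (digit_expansion X) \<partial>stream_space P)"
    if "A \<in> sets borel" for A
  proof -
    have "emeasure ?M A = (\<integral>\<^sup>+y. indicator A y \<partial>?M)"
      using that by simp
    also have "\<dots> = (\<integral>\<^sup>+X. indicator A (digit_expansion X) \<partial>stream_space P)"
      unfolding P_def using that by (subst nn_integral_distr) auto
    finally show ?thesis .
  qed
  have "emeasure ?M A = (\<Sum>d\<in>digit_set b. emeasure ?M (ifs_map b d -` A)) / sum_list b"
    if A: "A \<in> sets borel" for A
  proof -
    have "emeasure ?M A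
        = (\<integral>\<^sup>+d. (\<integral>\<^sup>+X. indicator A (digit_expansion (d ## X)) \<partial>stream_space P) \<partial>P)"
      using A by (simp add: emeasure_M P.nn_integral_stream_space)
    also have "\<dots> = (\<Sum>d\<in>digit_set b.
        (\<integral>\<^sup>+X. indicator A (digit_expansion (d ## X)) \<partial>stream_space P)) / card (digit_set b)"
      unfolding P_def by (rule nn_integral_pmf_of_set[OF digit_set_nonempty finite_digit_set])
    also have "\<dots> = (\<Sum>d\<in>digit_set b. emeasure ?M (ifs_map b d -` A)) / card (digit_set b)"
      using A measurable_sets_borel[OF measurable_ifs_map A]
      by (intro arg_cong2[where f = "(/)"] sum.cong refl)
        (simp add: emeasure_M digit_expansion_SCons indicator_vimage)
    finally show ?thesis by (simp add: card_digits)
  qed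
  then have "measure ?M A =
      (1 / real (sum_list b)) * (\<Sum>d\<in>digit_set b. measure ?M (ifs_map b d -` A))"
    if "A \<in> sets borel" for A
    using that sum_list_ge_2
    by (simp add: M.emeasure_eq_measure sum_ennreal divide_ennreal sum_nonneg
        ennreal_of_nat_eq_real_of_nat)
  then show ?thesis unfolding self_similar_def using M.real_distribution_axioms by blast
qed

end

locale self_similar_distribution = digit_vector +
  fixes M :: "real measure"
  assumes self_similar: "self_similar b M"
begin

sublocale real_distribution M
  using self_similar unfolding self_similar_def by blast

lemma measure_self_similar:
  "A \<in> sets borel \<Longrightarrow>
    measure M A = (1 / real (sum_list b)) * (\<Sum>d\<in>digit_set b. measure M (ifs_map b d -` A))"
  using self_similar unfolding self_similar_def by blast

lemma measure_mono_vimage_ifs_map: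
  assumes "A \<in> sets borel" "B \<in> sets borel"
    and "\<And>d. d \<in> digit_set b \<Longrightarrow> ifs_map b d -` A \<subseteq> B"
  shows "measure M A \<le> measure M B"
proof -
  have "(\<Sum>d\<in>digit_set b. measure M (ifs_map b d -` A)) \<le> (\<Sum>d\<in>digit_set b. measure M B)"
    using assms by (intro sum_mono finite_measure_mono) auto
  also have "\<dots> = real (sum_list b) * measure M B"
    using card_digits by simp
  finally show ?thesis
    using measure_self_similar[OF assms(1)] sum_list_ge_2 by (simp add: field_simps)
qed

lemma measure_beyond_unit_interval_le:
  "measure M (beyond_unit_interval s) \<le> cdf M (- s) + (1 - cdf M (1 + s))"
proof -
  have "measure M (beyond_unit_interval s) \<le> measure M {..- s} + measure M {1 + s<..}"
    unfolding beyond_unit_interval_def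
    by (intro order.trans[OF measure_Un_le] add_mono finite_measure_mono) auto
  also have "measure M {1 + s<..} = 1 - cdf M (1 + s)"
    using prob_compl[of "{..1 + s}"] by (simp add: cdf_def2 Compl_eq_Diff_UNIV[symmetric])
  finally show ?thesis by (simp add: cdf_def2)
qed

lemma measure_beyond_unit_interval:
  assumes "t > 0"
  shows "measure M (beyond_unit_interval t) = 0"
proof -
  let ?N = "real (length b)"
  have borel: "beyond_unit_interval s \<in> sets borel" for s
    by (simp add: beyond_unit_interval_def)
  have mono: "measure M (beyond_unit_interval t) \<le> measure M (beyond_unit_interval (?N ^ k * t))"
    for k
  proof (induction k)
    case (Suc k)
    have "measure M (beyond_unit_interval (?N ^ k * t))
        \<le> measure M (beyond_unit_interval (?N * (?N ^ k * t)))"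
      by (intro measure_mono_vimage_ifs_map borel vimage_ifs_map_beyond_unit_interval
          digit_set_less_length)
    with Suc.IH show ?case by (simp add: mult.assoc)
  qed simp
  have tail: "((\<lambda>s. cdf M (- s) + (1 - cdf M (1 + s))) \<longlongrightarrow> 0 + (1 - 1)) at_top"
    by (intro tendsto_intros filterlim_compose[OF cdf_lim_at_bot filterlim_uminus_at_bot_at_top]
        filterlim_compose[OF cdf_lim_at_top_prob]
        filterlim_tendsto_add_at_top[OF tendsto_const filterlim_ident])
  have "measure M (beyond_unit_interval t) \<le> e" if "e > 0" for e
  proof -
    obtain S where S: "\<And>s. S \<le> s \<Longrightarrow> cdf M (- s) + (1 - cdf M (1 + s)) < e"
      using order_tendstoD(2)[OF tail, of e] \<open>e > 0\<close>
      by (auto simp: eventually_at_top_linorder)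
    obtain k where "S / t < ?N ^ k"
      using real_arch_pow[of ?N "S / t"] length_ge_3 by auto
    then have "S \<le> ?N ^ k * t" using \<open>t > 0\<close> by (simp add: divide_less_eq)
    then show ?thesis
      using mono[of k] measure_beyond_unit_interval_le[of "?N ^ k * t"] S by fastforce
  qed
  then show ?thesis by (meson dense_ge measure_nonneg antisym)
qed

lemma cdf_neg_eq_0:
  assumes "y < 0"
  shows "cdf M y = 0"
proof -
  have "{..y} \<subseteq> beyond_unit_interval (- y / 2)"
    using assms by (auto simp: beyond_unit_interval_def)
  then have "cdf M y \<le> measure M (beyond_unit_interval (- y / 2))"
    unfolding cdf_def2 by (intro finite_measure_mono) (auto simp: beyond_unit_interval_def)
  then show ?thesis
    using measure_beyond_unit_interval[of "- y / 2"] assms cdf_nonneg[of y] by simp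
qed

lemma cdf_ge_1_eq_1:
  assumes "1 \<le> y"
  shows "cdf M y = 1"
proof -
  have gt_1: "cdf M z = 1" if "1 < z" for z
  proof -
    have "{z<..} \<subseteq> beyond_unit_interval ((z - 1) / 2)"
      using that by (auto simp: beyond_unit_interval_def field_simps)
    then have "measure M {z<..} \<le> measure M (beyond_unit_interval ((z - 1) / 2))"
      by (intro finite_measure_mono) (auto simp: beyond_unit_interval_def)
    moreover have "measure M {z<..} = 1 - cdf M z"
      using prob_compl[of "{..z}"] by (simp add: cdf_def2 Compl_eq_Diff_UNIV[symmetric])
    ultimately show ?thesis
      using measure_beyond_unit_interval[of "(z - 1) / 2"] that cdf_bounded_prob[of z] by simp
  qed
  have "eventually (\<lambda>z. cdf M z = 1) (at_right 1)"
    using eventually_at_right_less by (rule eventually_mono) (rule gt_1)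
  then have "(cdf M \<longlongrightarrow> 1) (at_right 1)" by (rule tendsto_eventually)
  then have "cdf M 1 = 1"
    using cdf_is_right_cont tendsto_unique[OF trivial_limit_at_right_real]
    by (metis continuous_within)
  then show ?thesis using assms gt_1 by (cases "y = 1") auto
qed

lemma measure_atLeastAtMost_0_eq_cdf:
  assumes "0 \<le> x"
  shows "measure M {0..x} = cdf M x"
proof -
  have "eventually (\<lambda>y. cdf M y = 0) (at_left 0)"
    using eventually_at_left_real[of "-1" 0] by (auto elim!: eventually_mono intro: cdf_neg_eq_0)
  then have "(cdf M \<longlongrightarrow> 0) (at_left 0)" by (rule tendsto_eventually)
  with cdf_at_left have "measure M {..<0} = 0"
    using tendsto_unique[OF trivial_limit_at_left_real] by metis
  moreover have "{0..x} = {..x} - {..<0}" by auto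
  ultimately show ?thesis
    using assms by (simp add: finite_measure_Diff subset_eq cdf_def2)
qed

end

context self_similar_distribution
begin

lemma cdf_self_similar:
  "cdf M y = (1 / real (sum_list b)) * (\<Sum>d\<in>digit_set b. cdf M (real (length b) * y - real d))"
proof -
  have "b \<noteq> []" using length_ge_3 by auto
  then show ?thesis
    using measure_self_similar[of "{..y}"] by (simp add: cdf_def2 vimage_ifs_map_atMost)
qed

lemma cdf_digit_recursion:
  assumes "0 \<le> x"
  defines "j \<equiv> nat \<lfloor>real (length b) * x\<rfloor>"
  shows "cdf M x = real (card {d \<in> digit_set b. d < j}) / real (sum_list b)
      + (if j \<in> digit_set b then 1 / real (sum_list b) else 0) * cdf M (frac (real (length b) * x))"
proof -
  let ?N = "real (length b)"
  have j: "real j = of_int \<lfloor>?N * x\<rfloor>" unfolding j_def using assms by simp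
  have "cdf M (?N * x - real d)
      = (if d < j then 1 else 0) + (if d = j then cdf M (frac (?N * x)) else 0)" for d
  proof (cases rule: linorder_cases[of d j])
    case less
    then have "1 \<le> ?N * x - real d" using j by linarith
    then show ?thesis using less cdf_ge_1_eq_1 by simp
  next
    case equal
    then show ?thesis using j by (simp add: frac_def)
  next
    case greater
    then have "?N * x - real d < 0" using j by linarith
    then show ?thesis using greater cdf_neg_eq_0 by simp
  qed
  then have "(\<Sum>d\<in>digit_set b. cdf M (?N * x - real d))
      = real (card {d \<in> digit_set b. d < j})
        + (if j \<in> digit_set b then cdf M (frac (?N * x)) else 0)"
    using finite_digit_set by (simp add: sum.distrib sum.inter_filter[symmetric] sum.delta)
  then show ?thesis
    using cdf_self_similar[of x] by (simp add: add_divide_distrib)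
qed

lemma cdf_rational_affine_step:
  assumes "0 \<le> x"
  shows "\<exists>a\<in>\<rat>. \<exists>c\<in>\<rat>. 0 \<le> c \<and> c \<le> 1 / real (sum_list b) \<and>
    cdf M x = a + c * cdf M (frac (real (length b) * x))"
proof -
  define j where "j = nat \<lfloor>real (length b) * x\<rfloor>"
  show ?thesis
    using cdf_digit_recursion[OF assms] unfolding j_def[symmetric]
    by (intro bexI[of _ "real (card {d \<in> digit_set b. d < j}) / real (sum_list b)"]
        bexI[of _ "if j \<in> digit_set b then 1 / real (sum_list b) else 0"]) auto
qed

end

context digit_vector
begin

lemma self_similar_unique:
  assumes "self_similar b M1" "self_similar b M2"
  shows "M1 = M2"
proof -
  interpret M1: self_similar_distribution b M1
    by (intro_locales) (simp_all add: self_similar_distribution_axioms_def assms(1))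
  interpret M2: self_similar_distribution b M2
    by (intro_locales) (simp_all add: self_similar_distribution_axioms_def assms(2))
  have bound: "\<bar>cdf M1 x - cdf M2 x\<bar> \<le> (1 / real (sum_list b)) ^ k" if "0 \<le> x" for x k
    using that
  proof (induction k arbitrary: x)
    case 0
    then show ?case
      using M1.cdf_nonneg[of x] M1.cdf_bounded_prob[of x] M2.cdf_nonneg[of x]
        M2.cdf_bounded_prob[of x]
      by (simp add: abs_le_iff)
  next
    case (Suc k)
    let ?c = "if nat \<lfloor>real (length b) * x\<rfloor> \<in> digit_set b then 1 / real (sum_list b) else 0"
    let ?y = "frac (real (length b) * x)"
    have "\<bar>cdf M1 x - cdf M2 x\<bar> = ?c * \<bar>cdf M1 ?y - cdf M2 ?y\<bar>"
      using M1.cdf_digit_recursion[OF Suc.prems] M2.cdf_digit_recursion[OF Suc.prems]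
      by (simp add: abs_mult right_diff_distrib[symmetric])
    also have "\<dots> \<le> (1 / real (sum_list b)) * (1 / real (sum_list b)) ^ k"
      using Suc.IH[of ?y] by (intro mult_mono) auto
    finally show ?case by simp
  qed
  have "cdf M1 x = cdf M2 x" for x
  proof (cases "x < 0")
    case True
    then show ?thesis using M1.cdf_neg_eq_0 M2.cdf_neg_eq_0 by simp
  next
    case False
    have "(\<lambda>k. (1 / real (sum_list b)) ^ k) \<longlonglongrightarrow> 0"
      using sum_list_ge_2 by (intro LIMSEQ_power_zero) simp
    then have "\<bar>cdf M1 x - cdf M2 x\<bar> \<le> 0"
      using bound False by (intro LIMSEQ_le_const) auto
    then show ?thesis by simp
  qed
  then show ?thesis
    using cdf_unique M1.real_distribution_axioms M2.real_distribution_axioms by blast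
qed

lemma self_similar_ss_measure: "self_similar b (ss_measure b)"
  unfolding ss_measure_eq_The_self_similar
  by (rule theI[where P = "self_similar b", OF self_similar_digit_expansion])
    (rule self_similar_unique[OF _ self_similar_digit_expansion])

end

theorem lemma2p6:
  fixes N :: nat and b :: "nat list" and x :: real
  assumes "binary_digit_vector N b"
    and "x \<in> \<rat>" and "0 \<le> x" and "x \<le> 1"
  shows "ss_cdf b x \<in> \<rat>"
proof -
  have "digit_vector b"
    using assms(1) by unfold_locales (simp add: binary_digit_vector_def)
  then interpret self_similar_distribution b "ss_measure b"
    by (simp add: self_similar_distribution_def self_similar_distribution_axioms_def
        digit_vector.self_similar_ss_measure)
  let ?T = "\<lambda>y. frac (real (length b) * y)"
  obtain i j where "i < j" and periodic: "(?T ^^ i) x = (?T ^^ j) x"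
    using frac_mult_orbit_repeats[OF \<open>x \<in> \<rat>\<close>] .
  have "cdf (ss_measure b) x \<in> \<rat>"
  proof (rule affine_recursion_periodic_rational[where S = "{0..}" and T = ?T
        and F = "cdf (ss_measure b)" and r = "1 / real (sum_list b)" and i = i and j = j])
    show "1 / real (sum_list b) < 1" using sum_list_ge_2 by simp
  qed (use \<open>i < j\<close> periodic \<open>0 \<le> x\<close> cdf_rational_affine_step in simp_all)
  then show ?thesis
    unfolding ss_cdf_def using measure_atLeastAtMost_0_eq_cdf[OF \<open>0 \<le> x\<close>] by simp
qed

end
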